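(* Let $\mu>0$ and let $\mathcal{D}_\mu$ be the collection of all mixed Poisson random variables $D$ with $\mathbb{E}(D)=\mu$. Let $\mu_c$ be the largest real root of $2x=e^{x-1/2}$ ($\mu_c\approx 1.756$). Let $X^*$ be the random variable with $$\mathbb{P}(X^*=\max(\mu,\mu_c))=1-\mathbb{P}(X^*=0)=\min(1,\mu/\mu_c),$$ and let $D^*$ be mixed Poisson$(X^* )$. Then $$\min_{D\in\mathcal{D}_\mu} q_D=q_{D^*}.$$
   Context: For a non-negative real random variable $X$, a random variable $D$ is mixed Poisson$(X)$ if $\mathbb{P}(D=k)=\mathbb{E}\big(\tfrac{X^k}{k!}e^{-X}\big)$ for $k\in\{0,1,2,\dots\}$; then $\mathbb{E}(D)=\mathbb{E}(X)=:\mu_X$. For an $\{0,1,2,\dots\}$-valued random variable $D$ with $0<\mu_D=\mathbb{E}(D)<\infty$, its generating function is $f_D(s)=\mathbb{E}(s^D)$, $s\in[0,1]$, and $\bar f_D(s)=f_D'(s)/\mu_D=\sum_{k\ge1}\frac{k\mathbb{P}(D=k)}{\mu_D}s^{k-1}$ (the generating function of $\bar D-1$, where $\bar D$ is the size-biased version of $D$). For $D$ mixed Poisson$(X)$ one has $f_D(s)=\mathbb{E}(e^{-(1-s)X})$ and $\bar f_D(s)=\mathbb{E}(Xe^{-(1-s)X})/\mu_X$. $z_D$ denotes the smallest root in $[0,1]$ of $s=\bar f_D(s)$, and $q_D:=f_D(z_D)$. (In the Poissonian random graph with i.i.d. vertex weights distributed as $X$, $1-q_D$ is the limiting fraction of vertices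 in the largest component.) *)

theory Defs
  imports "HOL-Probability.Probability"
begin

definition nonneg_rv_mean :: "'a measure \<Rightarrow> ('a \<Rightarrow> real) \<Rightarrow> real \<Rightarrow> bool" where
  "nonneg_rv_mean M X mu \<longleftrightarrow> prob_space M \<and> X \<in> borel_measurable M \<and>
     (AE w in M. 0 \<le> X w) \<and> integrable M X \<and> (\<integral>w. X w \<partial>M) = mu"

definition mixed_poisson_pmf :: "'a measure \<Rightarrow> ('a \<Rightarrow> real) \<Rightarrow> nat \<Rightarrow> real" where
  "mixed_poisson_pmf M X k = (\<integral>w. X w ^ k / fact k * exp (- X w) \<partial>M)"

text \<open>For a law p of a {0,1,2,...}-valued variable D (p k = P(D = k)):\<close>
definition gen_fun :: "(nat \<Rightarrow> real) \<Rightarrow> real \<Rightarrow> real" where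
  "gen_fun p s = (\<Sum>k. p k * s ^ k)"

definition mean_nat :: "(nat \<Rightarrow> real) \<Rightarrow> real" where
  "mean_nat p = (\<Sum>k. real k * p k)"

text \<open>bar f_D(s) = f_D'(s)/mu_D = sum_{k>=1} k P(D=k)/mu_D s^(k-1).\<close>
definition sb_gen_fun :: "(nat \<Rightarrow> real) \<Rightarrow> real \<Rightarrow> real" where
  "sb_gen_fun p s = (\<Sum>k. real (Suc k) * p (Suc k) / mean_nat p * s ^ k)"

definition z_root :: "(nat \<Rightarrow> real) \<Rightarrow> real" where
  "z_root p = (LEAST s. s \<in> {0..1} \<and> s = sb_gen_fun p s)"

definition q_val :: "(nat \<Rightarrow> real) \<Rightarrow> real" where
  "q_val p = gen_fun p (z_root p)"

definition mu_c :: real where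
  "mu_c = (GREATEST x::real. 2 * x = exp (x - 1/2))"

end

theory Submission
  imports Defs
begin

text \<open>
  Write t = 1 - z_D. For D mixed Poisson(X) the generating functions are Laplace transforms,
  f_D(s) = E e^(-(1-s)X) and bar f_D(s) = E(X e^(-(1-s)X))/mu, so the fixed-point equation for z_D
  reads E(X (1 - e^(-tX))) = mu t and 1 - q_D = a := E(1 - e^(-tX)).  Two inequalities bound a:
  (i) for every w \<ge> 1 with 1 + 2w \<le> e^w, the function y \<mapsto> (1 - e^(-y))(w + y) lies below its
  tangent at y = w on [0, \<infinity>); averaging at y = tX and using the fixed-point equation gives
  w a + mu t^2 \<le> slope(w) mu t + offset(w);  (ii) Jensen: a \<le> 1 - e^(-t mu).
  For mu < mu_c the choice w = mu_c - 1/2 (where the offset vanishes) and maximisation over t give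
  a \<le> (mu/mu_c)(1 - 1/(2 mu_c)); for mu \<ge> mu_c the choice w = mu (1 - e^(-w)) together with (ii)
  gives a \<le> 1 - e^(-w).  In both cases the right-hand side is 1 - q for the two-point law D*.
\<close>

text \<open>The tangent line at y = w of y \<mapsto> (1 - e^(-y))(w + y) has slope tangent_slope w and
  intercept tangent_offset w.\<close>
definition tangent_slope :: "real \<Rightarrow> real" where
  "tangent_slope w = 1 + exp (- w) * (2 * w - 1)"

definition tangent_offset :: "real \<Rightarrow> real" where
  "tangent_offset w = w - w * exp (- w) - 2 * w\<^sup>2 * exp (- w)"

text \<open>Tangent inequality: for w \<ge> 1 with 1 + 2w \<le> e^w, the function y \<mapsto> (1 - e^(-y))(w + y)
  lies below its tangent at y = w on [0, \<infinity>). The gap u between tangent and function is convex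
  beyond c = max 0 (2 - w) and concave on [0, c]; the condition on w makes u(0) \<ge> 0.\<close>
lemma tangent_bound:
  fixes w y :: real
  assumes w: "1 \<le> w" "1 + 2 * w \<le> exp w" and y: "0 \<le> y"
  shows "(1 - exp (- y)) * (w + y) \<le> tangent_slope w * y + tangent_offset w"
proof -
  define u where "u = (\<lambda>y. tangent_slope w * y + tangent_offset w - (1 - exp (- y)) * (w + y))"
  define u' where "u' = (\<lambda>y. tangent_slope w - 1 - exp (- y) * (w + y - 1))"
  define u'' where "u'' = (\<lambda>y::real. exp (- y) * (w + y - 2))"
  have du: "(u has_real_derivative u' x) (at x)" for x
    unfolding u_def u'_def by (auto intro!: derivative_eq_intros simp: algebra_simps)
  have du': "(u' has_real_derivative u'' x) (at x)" for x
    unfolding u'_def u''_def by (auto intro!: derivative_eq_intros simp: algebra_simps)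
  have uw: "u w = 0" and u'w: "u' w = 0"
    unfolding u_def u'_def tangent_slope_def tangent_offset_def
    by (simp_all add: algebra_simps power2_eq_square)
  have u0: "0 \<le> u 0"
  proof -
    have "u 0 = w * exp (- w) * (exp w - 1 - 2 * w)"
      unfolding u_def tangent_offset_def
      by (simp add: algebra_simps power2_eq_square exp_minus_inverse)
    then show ?thesis using w by simp
  qed
  define c where "c = max 0 (2 - w)"
  \<comment> \<open>On the half-line from c, u is convex, so it lies above its horizontal tangent at w.\<close>
  have convex_part: "0 \<le> u y" if "c \<le> y" for y
  proof -
    have "u' w * (y - w) \<le> u y - u w"
      by (rule f''_imp_f'[of "{c..}" u u' u'']) (use du du' w that in \<open>auto simp: c_def u''_def\<close>)
    then show ?thesis using uw u'w by simp
  qed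
  \<comment> \<open>On [0, c] u is concave, so it is bounded below by its values at the endpoints.\<close>
  show ?thesis
  proof (cases "c \<le> y")
    case False
    then have c: "c = 2 - w" using y by (auto simp: c_def)
    have "concave_on {0..c} u"
      by (rule f''_le0_imp_concave[of _ u u' u'']) (use du du' c in \<open>auto simp: u''_def mult_nonneg_nonpos\<close>)
    then have "min (u 0) (u c) \<le> u y"
      by (rule concave_on_ge_min) (use False y in auto)
    then show ?thesis using u0 convex_part[of c] unfolding u_def by simp
  qed (use convex_part in \<open>simp add: u_def\<close>)
qed

lemma sums_integral_dominated:
  fixes f :: "nat \<Rightarrow> 'a \<Rightarrow> real"
  assumes f: "\<And>i. integrable M (f i)" and F: "F \<in> borel_measurable M" and W: "integrable M W"
    and sums: "AE x in M. (\<lambda>i. f i x) sums F x"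
    and bound: "\<And>n. AE x in M. \<bar>\<Sum>i<n. f i x\<bar> \<le> W x"
  shows "(\<lambda>i. integral\<^sup>L M (f i)) sums integral\<^sup>L M F"
proof -
  have "(\<lambda>n. integral\<^sup>L M (\<lambda>x. \<Sum>i<n. f i x)) \<longlonglongrightarrow> integral\<^sup>L M F"
    by (rule integral_dominated_convergence[where w = W])
       (use f F W sums bound in \<open>auto simp: sums_def\<close>)
  then show ?thesis using f by (simp add: sums_def)
qed

lemma poisson_weights_sums:
  fixes x s :: real
  assumes "0 \<le> s" "s \<le> 1"
  shows "(\<lambda>k. x ^ k / fact k * exp (- x) * s ^ k) sums exp (- (1 - s) * x)"
proof -
  have "(\<lambda>k. (s * x) ^ k / fact k * exp (- x)) sums (exp (s * x) * exp (- x))"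
    using sums_mult2[OF exp_converges[of "s * x"]] by (simp add: divide_inverse mult.commute)
  moreover have "exp (s * x) * exp (- x) = exp (- (1 - s) * x)"
    by (simp add: exp_add[symmetric] algebra_simps)
  ultimately show ?thesis by (simp add: power_mult_distrib mult_ac)
qed

lemma poisson_weights_finite_sum_le:
  fixes x s :: real
  assumes "0 \<le> x" "0 \<le> s" "s \<le> 1" "finite K"
  shows "(\<Sum>k\<in>K. x ^ k / fact k * exp (- x) * s ^ k) \<le> 1"
proof -
  note sums = poisson_weights_sums[OF assms(2,3), of x]
  have "(\<Sum>k\<in>K. x ^ k / fact k * exp (- x) * s ^ k) \<le> exp (- (1 - s) * x)"
    using sum_le_suminf[OF sums_summable[OF sums] assms(4)] assms sums by (simp add: sums_iff)
  also have "\<dots> \<le> 1" using assms by (simp add: mult_nonpos_nonneg)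
  finally show ?thesis .
qed

text \<open>Averaging the Poisson series against a non-negative integrable weight G: this gives both
  f_D (with G = 1) and its derivative (with G = X) as Laplace-type integrals.\<close>
lemma mixed_poisson_weighted_series:
  fixes X G :: "'a \<Rightarrow> real"
  assumes X: "X \<in> borel_measurable M" "AE w in M. 0 \<le> X w"
    and G: "G \<in> borel_measurable M" "integrable M G" "AE w in M. 0 \<le> G w"
    and s: "0 \<le> s" "s \<le> 1"
  shows "(\<lambda>k. (\<integral>w. G w * (X w ^ k / fact k * exp (- X w)) \<partial>M) * s ^ k)
           sums (\<integral>w. G w * exp (- (1 - s) * X w) \<partial>M)"
proof -
  define f where "f = (\<lambda>k w. G w * (X w ^ k / fact k * exp (- X w)) * s ^ k)"
  have partial: "AE w in M. \<bar>\<Sum>k\<in>K. f k w\<bar> \<le> G w" if "finite K" for K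
    using X(2) G(3)
  proof eventually_elim
    case (elim w)
    have "0 \<le> (\<Sum>k\<in>K. X w ^ k / fact k * exp (- X w) * s ^ k)"
      using elim s by (intro sum_nonneg) simp
    moreover have "(\<Sum>k\<in>K. X w ^ k / fact k * exp (- X w) * s ^ k) \<le> 1"
      using poisson_weights_finite_sum_le elim s that by simp
    moreover have "(\<Sum>k\<in>K. f k w) = G w * (\<Sum>k\<in>K. X w ^ k / fact k * exp (- X w) * s ^ k)"
      by (simp add: f_def sum_distrib_left mult.assoc)
    ultimately show ?case
      using elim by (simp add: abs_mult mult_left_le)
  qed
  have "integrable M (f k)" for k
    by (rule Bochner_Integration.integrable_bound[OF G(2)])
       (use X G partial[of "{k}"] in \<open>auto simp: f_def\<close>)
  moreover have "AE w in M. (\<lambda>k. f k w) sums (G w * exp (- (1 - s) * X w))"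
    using sums_mult[OF poisson_weights_sums[OF s], of "G _"] unfolding f_def by (simp add: mult.assoc)
  ultimately have "(\<lambda>k. integral\<^sup>L M (f k)) sums (\<integral>w. G w * exp (- (1 - s) * X w) \<partial>M)"
    by (intro sums_integral_dominated[where W = G]) (use X G partial in auto)
  then show ?thesis unfolding f_def integral_mult_left_zero .
qed


lemma nonneg_rv_meanD:
  assumes "nonneg_rv_mean M X mu"
  shows "prob_space M" "X \<in> borel_measurable M" "AE w in M. 0 \<le> X w" "integrable M X"
    "(\<integral>w. X w \<partial>M) = mu"
  using assms unfolding nonneg_rv_mean_def by auto

lemma mixed_poisson_pmf_nonneg:
  assumes "AE w in M. 0 \<le> X w"
  shows "0 \<le> mixed_poisson_pmf M X k"
  unfolding mixed_poisson_pmf_def by (rule integral_nonneg_AE) (use assms in auto)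

lemma mixed_poisson_gen_fun:
  assumes X: "nonneg_rv_mean M X mu" and s: "0 \<le> s" "s \<le> 1"
  shows "gen_fun (mixed_poisson_pmf M X) s = (\<integral>w. exp (- (1 - s) * X w) \<partial>M)"
proof -
  interpret prob_space M using nonneg_rv_meanD[OF X] by simp
  have "(\<lambda>k. (\<integral>w. 1 * (X w ^ k / fact k * exp (- X w)) \<partial>M) * s ^ k)
          sums (\<integral>w. 1 * exp (- (1 - s) * X w) \<partial>M)"
    by (rule mixed_poisson_weighted_series) (use nonneg_rv_meanD[OF X] s in auto)
  then show ?thesis unfolding gen_fun_def mixed_poisson_pmf_def by (simp add: sums_iff)
qed

lemma mixed_poisson_pmf_Suc:
  "real (Suc k) * mixed_poisson_pmf M X (Suc k) = (\<integral>w. X w * (X w ^ k / fact k * exp (- X w)) \<partial>M)"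
proof -
  have "real (Suc k) * mixed_poisson_pmf M X (Suc k)
      = (\<integral>w. real (Suc k) * (X w ^ Suc k / fact (Suc k) * exp (- X w)) \<partial>M)"
    unfolding mixed_poisson_pmf_def by (simp only: integral_mult_right_zero)
  also have "\<dots> = (\<integral>w. X w * (X w ^ k / fact k * exp (- X w)) \<partial>M)"
    by (simp add: field_simps del: of_nat_Suc)
  finally show ?thesis .
qed

lemma mixed_poisson_derivative_series:
  assumes X: "nonneg_rv_mean M X mu" and s: "0 \<le> s" "s \<le> 1"
  shows "(\<lambda>k. real (Suc k) * mixed_poisson_pmf M X (Suc k) * s ^ k)
           sums (\<integral>w. X w * exp (- (1 - s) * X w) \<partial>M)"
proof -
  have "(\<lambda>k. (\<integral>w. X w * (X w ^ k / fact k * exp (- X w)) \<partial>M) * s ^ k)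
          sums (\<integral>w. X w * exp (- (1 - s) * X w) \<partial>M)"
    by (rule mixed_poisson_weighted_series) (use nonneg_rv_meanD[OF X] s in auto)
  then show ?thesis by (simp only: mixed_poisson_pmf_Suc)
qed

lemma mixed_poisson_mean:
  assumes X: "nonneg_rv_mean M X mu"
  shows "mean_nat (mixed_poisson_pmf M X) = mu"
proof -
  have "(\<lambda>k. real (Suc k) * mixed_poisson_pmf M X (Suc k)) sums mu"
    using mixed_poisson_derivative_series[OF X, of 1] nonneg_rv_meanD(5)[OF X] by simp
  then have "(\<lambda>k. real k * mixed_poisson_pmf M X k) sums mu"
    using sums_Suc_iff[of "\<lambda>k. real k * mixed_poisson_pmf M X k" mu] by simp
  then show ?thesis unfolding mean_nat_def by (simp add: sums_iff)
qed

lemma mixed_poisson_sb_gen_fun_sums: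
  assumes X: "nonneg_rv_mean M X mu" and s: "0 \<le> s" "s \<le> 1"
  shows "(\<lambda>k. real (Suc k) * mixed_poisson_pmf M X (Suc k) / mean_nat (mixed_poisson_pmf M X) * s ^ k)
           sums ((\<integral>w. X w * exp (- (1 - s) * X w) \<partial>M) / mu)"
  using sums_divide[OF mixed_poisson_derivative_series[OF X s], of mu]
  by (simp add: mixed_poisson_mean[OF X] field_simps)

lemma mixed_poisson_sb_gen_fun:
  assumes X: "nonneg_rv_mean M X mu" and s: "0 \<le> s" "s \<le> 1"
  shows "sb_gen_fun (mixed_poisson_pmf M X) s = (\<integral>w. X w * exp (- (1 - s) * X w) \<partial>M) / mu"
  using mixed_poisson_sb_gen_fun_sums[OF X s] unfolding sb_gen_fun_def by (simp add: sums_iff)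

lemma nonneg_power_series_continuous:
  fixes c :: "nat \<Rightarrow> real"
  assumes c: "\<And>k. 0 \<le> c k" "summable c"
  shows "continuous_on {0..1} (\<lambda>s. \<Sum>k. c k * s ^ k)"
proof -
  have limit: "uniform_limit {0..1} (\<lambda>n s. \<Sum>k<n. c k * s ^ k) (\<lambda>s. \<Sum>k. c k * s ^ k) sequentially"
  proof (rule Weierstrass_m_test[OF _ c(2)])
    fix n and s :: real assume "s \<in> {0..1}"
    then show "norm (c n * s ^ n) \<le> c n"
      using c(1)[of n] by (simp add: abs_mult power_abs power_le_one mult_left_le)
  qed
  show ?thesis
    by (rule uniform_limit_theorem[OF _ limit]) (auto intro!: always_eventually continuous_intros)
qed

lemma mixed_poisson_sb_gen_fun_continuous:
  assumes X: "nonneg_rv_mean M X mu" and mu: "0 < mu"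
  shows "continuous_on {0..1} (sb_gen_fun (mixed_poisson_pmf M X))"
  unfolding sb_gen_fun_def
proof (rule nonneg_power_series_continuous)
  show "summable (\<lambda>k. real (Suc k) * mixed_poisson_pmf M X (Suc k) / mean_nat (mixed_poisson_pmf M X))"
    using mixed_poisson_sb_gen_fun_sums[OF X, of 1] by (simp add: sums_iff)
qed (use mu mixed_poisson_pmf_nonneg[OF nonneg_rv_meanD(3)[OF X]] in \<open>simp add: mixed_poisson_mean[OF X]\<close>)

lemma z_root_smallest:
  assumes cont: "continuous_on {0..1} (sb_gen_fun p)" and one: "sb_gen_fun p 1 = 1"
  shows "z_root p \<in> {0..1}" "z_root p = sb_gen_fun p (z_root p)"
    "\<And>s. s \<in> {0..1} \<Longrightarrow> s = sb_gen_fun p s \<Longrightarrow> z_root p \<le> s"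
proof -
  define S where "S = {s \<in> {0..1::real}. sb_gen_fun p s - s = 0}"
  have "closed S" unfolding S_def
    by (rule continuous_closed_preimage_constant) (auto intro!: continuous_intros cont)
  moreover have "1 \<in> S" and below: "bdd_below S" unfolding S_def using one by (auto intro!: bdd_belowI[of _ 0])
  ultimately have InfS: "Inf S \<in> S" using closed_contains_Inf by blast
  have "z_root p = Inf S"
    unfolding z_root_def
    by (rule Least_equality) (use InfS cInf_lower[OF _ below] in \<open>auto simp: S_def\<close>)
  then show "z_root p \<in> {0..1}" "z_root p = sb_gen_fun p (z_root p)"
    "\<And>s. s \<in> {0..1} \<Longrightarrow> s = sb_gen_fun p s \<Longrightarrow> z_root p \<le> s"
    using InfS cInf_lower[OF _ below] unfolding S_def by auto
qed

lemma mixed_poisson_z_root: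
  assumes X: "nonneg_rv_mean M X mu" and mu: "0 < mu"
  defines "p \<equiv> mixed_poisson_pmf M X"
  shows "z_root p \<in> {0..1}" "z_root p = sb_gen_fun p (z_root p)"
    "\<And>s. s \<in> {0..1} \<Longrightarrow> s = sb_gen_fun p s \<Longrightarrow> z_root p \<le> s"
  using z_root_smallest[OF mixed_poisson_sb_gen_fun_continuous[OF X mu]]
    mixed_poisson_sb_gen_fun[OF X, of 1] nonneg_rv_meanD(5)[OF X] mu
  unfolding p_def by simp_all

lemma exp_transform_integrable:
  assumes X: "nonneg_rv_mean M X mu" and t: "0 \<le> t"
  shows "integrable M (\<lambda>w. exp (- t * X w))" "integrable M (\<lambda>w. X w * exp (- t * X w))"
proof -
  note X' = nonneg_rv_meanD[OF X]
  interpret prob_space M by (rule X'(1))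
  have bound: "AE w in M. exp (- t * X w) \<le> 1"
    using X'(3) by eventually_elim (use t in simp)
  show "integrable M (\<lambda>w. exp (- t * X w))"
  proof (rule Bochner_Integration.integrable_bound[where f = "\<lambda>_. 1"])
    show "AE w in M. norm (exp (- t * X w)) \<le> norm (1::real)" using bound by simp
  qed (use X'(2) in simp_all)
  show "integrable M (\<lambda>w. X w * exp (- t * X w))"
    by (rule Bochner_Integration.integrable_bound[OF X'(4)])
       (use X' bound in \<open>auto simp: abs_mult mult_left_le\<close>)
qed

text \<open>With t = 1 - z_D, the fixed-point equation z_D = bar f_D(z_D) becomes the balance
  E(X (1 - e^(-tX))) = mu t, and q_D = 1 - E(1 - e^(-tX)).\<close>
lemma mixed_poisson_q_val:
  assumes X: "nonneg_rv_mean M X mu" and mu: "0 < mu"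
  obtains t where "0 \<le> t" "(\<integral>w. X w * (1 - exp (- t * X w)) \<partial>M) = mu * t"
    "q_val (mixed_poisson_pmf M X) = 1 - (\<integral>w. 1 - exp (- t * X w) \<partial>M)"
proof
  note X' = nonneg_rv_meanD[OF X]
  interpret prob_space M by (rule X'(1))
  define z where "z = z_root (mixed_poisson_pmf M X)"
  have z: "0 \<le> z" "z \<le> 1" "z = sb_gen_fun (mixed_poisson_pmf M X) z"
    using mixed_poisson_z_root[OF X mu] unfolding z_def by auto
  show "0 \<le> 1 - z" using z by simp
  note integrable = exp_transform_integrable[OF X \<open>0 \<le> 1 - z\<close>]
  have "z * mu = (\<integral>w. X w * exp (- (1 - z) * X w) \<partial>M)"
    using z(3) mixed_poisson_sb_gen_fun[OF X z(1,2)] mu by (simp add: field_simps)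
  then show "(\<integral>w. X w * (1 - exp (- (1 - z) * X w)) \<partial>M) = mu * (1 - z)"
    using integrable X' by (simp add: right_diff_distrib algebra_simps)
  show "q_val (mixed_poisson_pmf M X) = 1 - (\<integral>w. 1 - exp (- (1 - z) * X w) \<partial>M)"
    unfolding q_val_def z_def[symmetric] mixed_poisson_gen_fun[OF X z(1,2)]
    using integrable prob_space by simp
qed

lemma averaged_tangent_bound:
  assumes X: "nonneg_rv_mean M X mu" and t: "0 \<le> t"
    and w: "1 \<le> w" "1 + 2 * w \<le> exp w"
  shows "w * (\<integral>x. 1 - exp (- t * X x) \<partial>M) + t * (\<integral>x. X x * (1 - exp (- t * X x)) \<partial>M)
           \<le> tangent_slope w * t * mu + tangent_offset w"
proof -
  note X' = nonneg_rv_meanD[OF X]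
  interpret prob_space M by (rule X'(1))
  note integrable = exp_transform_integrable[OF X t]
  have "(\<integral>x. w * (1 - exp (- t * X x)) + t * (X x * (1 - exp (- t * X x))) \<partial>M)
          \<le> (\<integral>x. tangent_slope w * (t * X x) + tangent_offset w \<partial>M)"
  proof (rule integral_mono_AE)
    show "AE x in M. w * (1 - exp (- t * X x)) + t * (X x * (1 - exp (- t * X x)))
                       \<le> tangent_slope w * (t * X x) + tangent_offset w"
      using X'(3)
    proof eventually_elim
      case (elim x)
      have "(1 - exp (- (t * X x))) * (w + t * X x) \<le> tangent_slope w * (t * X x) + tangent_offset w"
        by (rule tangent_bound[OF w]) (use t elim in simp)
      then show ?case by (simp add: algebra_simps)
    qed
  qed (use integrable X' in \<open>auto simp: right_diff_distrib\<close>)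
  then show ?thesis
    using integrable X' prob_space by (simp add: right_diff_distrib algebra_simps)
qed

lemma survival_jensen:
  assumes X: "nonneg_rv_mean M X mu" and t: "0 \<le> t"
  shows "(\<integral>x. 1 - exp (- t * X x) \<partial>M) \<le> 1 - exp (- t * mu)"
proof -
  note X' = nonneg_rv_meanD[OF X]
  interpret prob_space M by (rule X'(1))
  have tangent: "1 - exp (- t * x) \<le> 1 - exp (- t * mu) + t * exp (- t * mu) * (x - mu)" for x
  proof -
    have "exp (- t * mu) * (1 + (t * mu - t * x)) \<le> exp (- t * mu) * exp (t * mu - t * x)"
      by (rule mult_left_mono) auto
    also have "\<dots> = exp (- t * x)" by (simp flip: exp_add)
    finally show ?thesis by (simp add: algebra_simps)
  qed
  have "(\<integral>x. 1 - exp (- t * X x) \<partial>M)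
          \<le> (\<integral>x. 1 - exp (- t * mu) + t * exp (- t * mu) * (X x - mu) \<partial>M)"
    by (rule integral_mono) (use exp_transform_integrable[OF X t] X' tangent in auto)
  also have "\<dots> = 1 - exp (- t * mu)"
    using X' prob_space by (simp add: right_diff_distrib)
  finally show ?thesis .
qed


text \<open>mu_c is a genuine root of 2x = e^(x - 1/2), located by the intermediate value theorem in
  [3/2, 2]; beyond it e^(x - 1/2) grows faster than 2x, so it is the largest root.\<close>
lemma mu_c_root: "2 * mu_c = exp (mu_c - 1/2)" "3/2 \<le> mu_c"
proof -
  define h where "h = (\<lambda>x::real. exp (x - 1/2) - 2 * x)"
  have "h (3/2) \<le> 0" unfolding h_def using exp_le by simp
  moreover have "0 \<le> h 2"
  proof -
    have "13/8 \<le> exp (1/2::real)"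
      using exp_lower_Taylor_quadratic[of "1/2::real"] by (simp add: power2_eq_square)
    then have "(13/8) ^ 3 \<le> exp (1/2::real) ^ 3" by (rule power_mono) simp
    also have "\<dots> = exp (2 - 1/2)" by (simp flip: exp_of_nat_mult)
    finally show ?thesis unfolding h_def by (simp add: power_divide)
  qed
  moreover have "continuous_on {3/2..2} h" unfolding h_def by (intro continuous_intros)
  ultimately obtain r where r: "3/2 \<le> r" "r \<le> 2" "h r = 0"
    using IVT'[of h "3/2" 0 2] by auto
  have root: "exp (r - 1/2) = 2 * r" using r(3) unfolding h_def by simp
  have above: "2 * x < exp (x - 1/2)" if "r < x" for x
  proof -
    have "2 * r * (1 + (x - r)) \<le> exp (r - 1/2) * exp (x - r)"
      unfolding root using r by (intro mult_left_mono) auto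
    also have "\<dots> = exp (x - 1/2)" by (simp flip: exp_add)
    moreover have "2 * (x - r) < 2 * r * (x - r)" using that r by (intro mult_strict_right_mono) auto
    ultimately show ?thesis by (simp add: algebra_simps)
  qed
  have "mu_c = r" unfolding mu_c_def
    by (rule Greatest_equality) (use root above in \<open>force, metis less_irrefl not_le\<close>)
  then show "2 * mu_c = exp (mu_c - 1/2)" "3/2 \<le> mu_c" using root r by auto
qed

text \<open>The hypothesis 1 + 2w \<le> e^w of the tangent bound holds for all w \<ge> mu_c - 1/2.\<close>
lemma exp_ge_beyond_mu_c:
  assumes "mu_c - 1/2 \<le> w"
  shows "1 + 2 * w \<le> exp w"
proof -
  have "2 * mu_c * (1 + (w - (mu_c - 1/2))) \<le> exp (mu_c - 1/2) * exp (w - (mu_c - 1/2))"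
    unfolding mu_c_root(1)[symmetric] using assms mu_c_root(2) exp_ge_add_one_self[of "w - (mu_c - 1/2)"]
    by (intro mult_left_mono) auto
  also have "\<dots> = exp w" by (simp flip: exp_add)
  moreover have "2 * (w - (mu_c - 1/2)) \<le> 2 * mu_c * (w - (mu_c - 1/2))"
    using assms mu_c_root(2) by (intro mult_right_mono) auto
  ultimately show ?thesis by (simp add: algebra_simps)
qed

lemma exp_minus_mu_c: "exp (- (mu_c - 1/2)) = 1 / (2 * mu_c)"
  unfolding exp_minus mu_c_root(1)[symmetric] by (simp add: inverse_eq_divide)

lemma tangent_at_mu_c:
  "tangent_slope (mu_c - 1/2) = 2 - 1 / mu_c" "tangent_offset (mu_c - 1/2) = 0"
proof -
  have mu_c: "mu_c \<noteq> 0" using mu_c_root(2) by simp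
  show "tangent_slope (mu_c - 1/2) = 2 - 1 / mu_c"
    unfolding tangent_slope_def exp_minus_mu_c using mu_c by (simp add: field_simps)
  have "tangent_offset w = w * (1 - exp (- w) * (1 + 2 * w))" for w
    unfolding tangent_offset_def by (simp add: power2_eq_square algebra_simps)
  also have "(mu_c - 1/2) * (1 - exp (- (mu_c - 1/2)) * (1 + 2 * (mu_c - 1/2))) = 0"
    unfolding exp_minus_mu_c using mu_c by (simp add: field_simps)
  finally show "tangent_offset (mu_c - 1/2) = 0" .
qed

text \<open>1/(2 mu_c) is a root of z = e^(-(1-z) mu_c), the fixed-point equation of the extremal law
  in the subcritical regime.\<close>
lemma mu_c_fixed_point: "1 / (2 * mu_c) = exp (- (1 - 1 / (2 * mu_c)) * mu_c)"
proof -
  have "- (1 - 1 / (2 * mu_c)) * mu_c = - (mu_c - 1/2)" using mu_c_root(2) by (simp add: field_simps)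
  then show ?thesis by (simp only: exp_minus_mu_c)
qed

text \<open>Subcritical mean: the tangent bound at w = mu_c - 1/2 has no offset, and maximizing the
  remaining quadratic in t gives exactly the survival probability of the extremal law.\<close>
lemma subcritical_survival_bound:
  fixes a t mu :: real
  assumes mu: "0 < mu"
    and tangent: "(mu_c - 1/2) * a + mu * t\<^sup>2
                    \<le> tangent_slope (mu_c - 1/2) * t * mu + tangent_offset (mu_c - 1/2)"
  shows "a \<le> mu / mu_c * (1 - 1 / (2 * mu_c))"
proof -
  define K where "K = 2 - 1 / mu_c"
  have mu_c: "3/2 \<le> mu_c" by (rule mu_c_root)
  have "mu * t\<^sup>2 + mu * (K\<^sup>2 / 4 - K * t) = mu * (t - K / 2)\<^sup>2"
    by (simp add: power2_eq_square algebra_simps)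
  also have "\<dots> \<ge> 0" using mu by simp
  finally have "(mu_c - 1/2) * a \<le> mu * (K\<^sup>2 / 4)"
    using tangent unfolding tangent_at_mu_c K_def[symmetric] by (simp add: algebra_simps)
  also have "mu * (K\<^sup>2 / 4) = (mu_c - 1/2) * (mu / mu_c * (1 - 1 / (2 * mu_c)))"
    unfolding K_def using mu_c by (simp add: field_simps power2_eq_square)
  finally show ?thesis by (rule mult_left_le_imp_le) (use mu_c in simp)
qed

lemma supercritical_fixed_point:
  assumes mu: "mu_c \<le> mu"
  obtains w where "mu_c - 1/2 \<le> w" "w = mu * (1 - exp (- w))"
proof -
  have mu_c: "3/2 \<le> mu_c" by (rule mu_c_root)
  define phi where "phi = (\<lambda>w. w - mu * (1 - exp (- w)))"
  have "phi (mu_c - 1/2) = (mu_c - mu) * (1 - 1 / (2 * mu_c))"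
    unfolding phi_def exp_minus_mu_c using mu_c by (simp add: field_simps)
  also have "\<dots> \<le> 0" using mu mu_c by (intro mult_nonpos_nonneg) auto
  finally have "phi (mu_c - 1/2) \<le> 0" .
  moreover have "0 \<le> phi mu" unfolding phi_def using mu mu_c by simp
  moreover have "continuous_on {mu_c - 1/2..mu} phi" unfolding phi_def by (intro continuous_intros)
  ultimately obtain w where "mu_c - 1/2 \<le> w" "phi w = 0"
    using IVT'[of phi "mu_c - 1/2" 0 mu] mu by auto
  then show ?thesis using that unfolding phi_def by simp
qed

text \<open>Supercritical mean: with w the root above, E = e^(-w) is a root for the degenerate law
  X = mu, and either Jensen (for t \<le> 1 - E) or the tangent bound at w (for t > 1 - E) gives the
  comparison.\<close>
lemma supercritical_survival_bound:
  fixes a t mu :: real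
  assumes mu: "mu_c \<le> mu"
    and tangent: "\<And>w. 1 \<le> w \<Longrightarrow> 1 + 2 * w \<le> exp w \<Longrightarrow>
                    w * a + mu * t\<^sup>2 \<le> tangent_slope w * t * mu + tangent_offset w"
    and jensen: "a \<le> 1 - exp (- t * mu)"
  obtains z where "0 \<le> z" "z \<le> 1" "z = exp (- (1 - z) * mu)" "a \<le> 1 - z"
proof -
  have mu_c: "3/2 \<le> mu_c" by (rule mu_c_root)
  obtain w where w: "mu_c - 1/2 \<le> w" "w = mu * (1 - exp (- w))"
    using supercritical_fixed_point[OF mu] .
  define E where "E = exp (- w)"
  have muE: "mu * (1 - E) = w" using w(2) unfolding E_def by simp
  have w1: "1 \<le> w" using w(1) mu_c by simp
  have ew: "1 + 2 * w \<le> exp w" by (rule exp_ge_beyond_mu_c[OF w(1)])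
  have E: "0 < E" "E \<le> 1" "E + 2 * w * E \<le> 1"
  proof -
    have "E * (1 + 2 * w) \<le> E * exp w" using ew by (intro mult_left_mono) (auto simp: E_def)
    then show "E + 2 * w * E \<le> 1" by (simp add: E_def exp_minus field_simps)
  qed (use w1 in \<open>auto simp: E_def\<close>)
  show ?thesis
  proof
    show "0 \<le> E" "E \<le> 1" using E by auto
    have "- (1 - E) * mu = - w" using muE by (simp add: algebra_simps)
    then have "exp (- (1 - E) * mu) = exp (- w)" by (simp only:)
    then show "E = exp (- (1 - E) * mu)" by (simp add: E_def)
    show "a \<le> 1 - E"
    proof (cases "t \<le> 1 - E")
      case True
      have "t * mu \<le> w" using mult_right_mono[OF True, of mu] mu mu_c muE by (simp add: algebra_simps)
      then have "exp (- w) \<le> exp (- t * mu)" by simp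
      then show ?thesis using jensen unfolding E_def by linarith
    next
      case False
      \<comment> \<open>Beyond 1 - E the right-hand side of the tangent bound minus mu t^2 decreases in t.\<close>
      define K where "K = tangent_slope w"
      have "K \<le> 2 * (1 - E)"
        using E(3) unfolding K_def tangent_slope_def E_def[symmetric] by (simp add: algebra_simps)
      then have "0 \<le> mu * ((t - (1 - E)) * (t + (1 - E) - K))"
        using mu mu_c False by (intro mult_nonneg_nonneg) auto
      then have "w * a \<le> K * (1 - E) * mu + tangent_offset w - mu * (1 - E)\<^sup>2"
        using tangent[OF w1 ew] unfolding K_def[symmetric] by (simp add: power2_eq_square algebra_simps)
      also have "\<dots> = K * (mu * (1 - E)) + tangent_offset w - mu * (1 - E) * (1 - E)"
        by (simp add: power2_eq_square mult_ac)
      also have "\<dots> = K * w + tangent_offset w - w * (1 - E)"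
        by (simp only: muE)
      also have "\<dots> = w * (1 - E)"
        unfolding K_def tangent_slope_def tangent_offset_def E_def[symmetric]
        by (simp add: power2_eq_square algebra_simps)
      finally show ?thesis using w1 by simp
    qed
  qed
qed


lemma survival_bound:
  fixes a t mu :: real
  assumes mu: "0 < mu"
    and tangent: "\<And>w. 1 \<le> w \<Longrightarrow> 1 + 2 * w \<le> exp w \<Longrightarrow>
                    w * a + mu * t\<^sup>2 \<le> tangent_slope w * t * mu + tangent_offset w"
    and jensen: "a \<le> 1 - exp (- t * mu)"
  obtains z where "0 \<le> z" "z \<le> 1" "z = exp (- (1 - z) * max mu mu_c)"
    "a \<le> min 1 (mu / mu_c) * (1 - z)"
proof (cases "mu < mu_c")
  case True
  have mu_c: "3/2 \<le> mu_c" by (rule mu_c_root)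
  have "a \<le> mu / mu_c * (1 - 1 / (2 * mu_c))"
    by (rule subcritical_survival_bound[OF mu tangent]) (use mu_c exp_ge_beyond_mu_c[of "mu_c - 1/2"] in auto)
  then show ?thesis
    using that[of "1 / (2 * mu_c)"] mu_c_fixed_point True mu mu_c by (simp add: max_def min_def)
next
  case False
  then obtain z where "0 \<le> z" "z \<le> 1" "z = exp (- (1 - z) * mu)" "a \<le> 1 - z"
    using supercritical_survival_bound[of mu a t] tangent jensen by force
  then show ?thesis
    using that[of z] False mu_c_root(2) by (simp add: max_def min_def)
qed

text \<open>The extremal law: X takes the value m with probability pr and 0 otherwise. Its q is at most
  1 - pr (1 - z) for every root z of z = e^(-(1-z) m), since z_D is the smallest such root.\<close>
lemma two_point_mixed_poisson:
  fixes m pr mu :: real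
  assumes m: "0 < m" and pr: "0 \<le> pr" "pr \<le> 1" "pr * m = mu" and mu: "0 < mu"
  defines "Xs \<equiv> \<lambda>b::bool. if b then m else 0"
  shows "nonneg_rv_mean (measure_pmf (bernoulli_pmf pr)) Xs mu"
    and "\<And>z. 0 \<le> z \<Longrightarrow> z \<le> 1 \<Longrightarrow> z = exp (- (1 - z) * m) \<Longrightarrow>
           q_val (mixed_poisson_pmf (measure_pmf (bernoulli_pmf pr)) Xs) \<le> 1 - pr * (1 - z)"
proof -
  define B where "B = measure_pmf (bernoulli_pmf pr)"
  show X: "nonneg_rv_mean B Xs mu"
    unfolding nonneg_rv_mean_def B_def
    using pr m by (auto simp: Xs_def mult.commute intro!: prob_space_measure_pmf integrable_measure_pmf_finite)
  define p where "p = mixed_poisson_pmf B Xs"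
  have gen: "gen_fun p s = pr * exp (- (1 - s) * m) + (1 - pr)" if "0 \<le> s" "s \<le> 1" for s
    using mixed_poisson_gen_fun[OF X that] pr unfolding p_def B_def by (simp add: Xs_def)
  have sb: "sb_gen_fun p s = exp (- (1 - s) * m)" if "0 \<le> s" "s \<le> 1" for s
  proof -
    have "mu * sb_gen_fun p s = m * (pr * exp (m * s - m))"
      using mixed_poisson_sb_gen_fun[OF X that] pr mu unfolding p_def B_def by (simp add: Xs_def field_simps)
    also have "\<dots> = mu * exp (- (1 - s) * m)" using pr by (simp add: algebra_simps)
    finally show ?thesis using mu by simp
  qed
  fix z assume z: "0 \<le> z" "z \<le> 1" "z = exp (- (1 - z) * m)"
  note zD = mixed_poisson_z_root[OF X mu, folded p_def]
  have "z_root p \<le> z" by (rule zD(3)) (use z sb in auto)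
  then have "exp (- (1 - z_root p) * m) \<le> exp (- (1 - z) * m)" using m by simp
  then have "q_val p \<le> pr * exp (- (1 - z) * m) + (1 - pr)"
    unfolding q_val_def using gen zD(1) pr by (auto intro: mult_left_mono)
  then have "q_val p \<le> pr * z + (1 - pr)" by (simp only: z(3)[symmetric])
  then show "q_val p \<le> 1 - pr * (1 - z)" by (simp add: algebra_simps)
qed

theorem theorem3p1:
  fixes mu :: real and M :: "'a measure" and X :: "'a \<Rightarrow> real"
  assumes "0 < mu"
    and "nonneg_rv_mean M X mu"
  shows "let m = max mu mu_c; Mstar = measure_pmf (bernoulli_pmf (min 1 (mu / mu_c)));
             Xstar = (\<lambda>b::bool. if b then m else 0)
         in nonneg_rv_mean Mstar Xstar mu \<and>
            q_val (mixed_poisson_pmf Mstar Xstar) \<le> q_val (mixed_poisson_pmf M X)"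
proof -
  note mu = assms(1) and X = assms(2)
  define m where "m = max mu mu_c"
  define pr where "pr = min 1 (mu / mu_c)"
  have mu_c: "0 < mu_c" using mu_c_root(2) by simp
  have m: "0 < m" and pr: "0 \<le> pr" "pr \<le> 1" "pr * m = mu"
    unfolding m_def pr_def using mu mu_c by (auto simp: min_def max_def field_simps)
  note extremal = two_point_mixed_poisson[OF m pr mu]
  obtain t where t: "0 \<le> t" "(\<integral>w. X w * (1 - exp (- t * X w)) \<partial>M) = mu * t"
    and q: "q_val (mixed_poisson_pmf M X) = 1 - (\<integral>w. 1 - exp (- t * X w) \<partial>M)"
    by (rule mixed_poisson_q_val[OF X mu])
  define a where "a = (\<integral>w. 1 - exp (- t * X w) \<partial>M)"
  have "w * a + mu * t\<^sup>2 \<le> tangent_slope w * t * mu + tangent_offset w"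
    if "1 \<le> w" "1 + 2 * w \<le> exp w" for w
    using averaged_tangent_bound[OF X t(1) that] t(2) by (simp add: a_def power2_eq_square mult_ac)
  then obtain z where z: "0 \<le> z" "z \<le> 1" "z = exp (- (1 - z) * m)" "a \<le> pr * (1 - z)"
    using survival_bound[OF mu _ survival_jensen[OF X t(1), folded a_def]] unfolding m_def pr_def by blast
  have "q_val (mixed_poisson_pmf (measure_pmf (bernoulli_pmf pr)) (\<lambda>b. if b then m else 0))
          \<le> q_val (mixed_poisson_pmf M X)"
    using extremal(2)[OF z(1-3)] z(4) unfolding q a_def[symmetric] by linarith
  then show ?thesis using extremal(1) unfolding Let_def m_def pr_def by simp
qed

end
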